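(* Let $n\ge3$. For a positive integer $k$ let $p_k=k\left(1-3\frac{k-1}{n-1}\right)$ and $q_k=3\left(1-15\frac{k-1}{n-1}+30\frac{(k-1)(k-2)}{(n-1)(n-2)}\right)$. Then: 1. If $1\le k_1<k_2\le n$, then $p_{k_1}q_{k_2}-p_{k_2}q_{k_1}=\frac{3(n+8)}{(n-1)^2(n-2)}(k_1-k_2)G(k_1,k_2)$. 2. If $1\le k_1<k_2<k_3\le n$, then $\sum_{i=1}^3k_i(n+2-3k_i)(k_{i+1}-k_{i+2})G(k_{i+1},k_{i+2})=0$, indices taken mod 3 ($k_4=k_1$, $k_5=k_2$). 3. If $1\le k_1<k_2<k_3<k_4\le n$ and $G(k_2,k_3)\le 0$, then (a) $k_2<\frac{n+2}3$ and $k_3>\frac{n+2}3$; (b) $p_{k_2}>0$ and $p_{k_3}<0$; (c) $G(k_1,k_2)>0$ and $G(k_3,k_4)>0$.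
   Context: For positive integers $k_1,k_2\le n$, $G(k_1,k_2)=(n+2-3k_1)(n+2-3k_2)+6(k_1-1)(k_2-1)+2(n-1)$. *)

theory Defs
  imports Complex_Main
begin

definition G :: "nat \<Rightarrow> nat \<Rightarrow> nat \<Rightarrow> real" where
  "G n k1 k2 = (real n + 2 - 3 * real k1) * (real n + 2 - 3 * real k2)
     + 6 * (real k1 - 1) * (real k2 - 1) + 2 * (real n - 1)"

definition pk :: "nat \<Rightarrow> nat \<Rightarrow> real" where
  "pk n k = real k * (1 - 3 * (real k - 1) / (real n - 1))"

definition qk :: "nat \<Rightarrow> nat \<Rightarrow> real" where
  "qk n k = 3 * (1 - 15 * (real k - 1) / (real n - 1)
     + 30 * (real k - 1) * (real k - 2) / ((real n - 1) * (real n - 2)))"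

end

theory Submission
  imports Defs
begin

text \<open>With \<open>m\<^sub>k = n + 2 - 3k\<close> one has \<open>p\<^sub>k = k m\<^sub>k / (n - 1)\<close> and
  \<open>G(k\<^sub>1,k\<^sub>2) = m\<^sub>k\<^sub>1 m\<^sub>k\<^sub>2 + 6(k\<^sub>1 - 1)(k\<^sub>2 - 1) + 2(n - 1)\<close>, where the last two terms
  add up to something positive.
  So \<open>G(k\<^sub>2,k\<^sub>3) \<le> 0\<close> forces \<open>m\<close> to change sign between \<open>k\<^sub>2\<close> and \<open>k\<^sub>3\<close>; as \<open>m\<close> decreases
  in \<open>k\<close>, the pairs \<open>(k\<^sub>1,k\<^sub>2)\<close> and \<open>(k\<^sub>3,k\<^sub>4)\<close> then lie on one side of the sign change and have
  \<open>G > 0\<close>.\<close>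

definition pk_factor :: "nat \<Rightarrow> nat \<Rightarrow> real" where
  "pk_factor n k = real n + 2 - 3 * real k"

lemma pk_eq:
  assumes "n \<noteq> 1"
  shows "pk n k = real k * pk_factor n k / (real n - 1)"
  using assms by (simp add: pk_def pk_factor_def field_simps)

lemma qk_eq:
  assumes "n \<ge> 3"
  shows "qk n k = 3 * ((real n - 1) * (real n - 2) - 15 * (real k - 1) * (real n - 2)
    + 30 * (real k - 1) * (real k - 2)) / ((real n - 1) * (real n - 2))"
  using assms unfolding qk_def by (simp add: divide_simps) (simp add: algebra_simps)

lemma pk_qk_cross:
  assumes "n \<ge> 3"
  shows "pk n k1 * qk n k2 - pk n k2 * qk n k1
    = 3 * (real n + 8) / ((real n - 1)^2 * (real n - 2)) * (real k1 - real k2) * G n k1 k2"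
proof -
  let ?Q = "\<lambda>k. (real n - 1) * (real n - 2) - 15 * (real k - 1) * (real n - 2)
    + 30 * (real k - 1) * (real k - 2)"
  have numerators: "real k1 * pk_factor n k1 * ?Q k2 - real k2 * pk_factor n k2 * ?Q k1
    = (real n + 8) * (real k1 - real k2) * G n k1 k2"
    by (simp add: G_def pk_factor_def algebra_simps)
  have "pk n k1 * qk n k2 - pk n k2 * qk n k1
    = 3 * (real k1 * pk_factor n k1 * ?Q k2 - real k2 * pk_factor n k2 * ?Q k1)
      / ((real n - 1)^2 * (real n - 2))"
    using assms by (simp add: pk_eq qk_eq divide_simps power2_eq_square) (simp add: algebra_simps)
  also have "\<dots> = 3 * ((real n + 8) * (real k1 - real k2) * G n k1 k2)
      / ((real n - 1)^2 * (real n - 2))"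
    by (simp only: numerators)
  finally show ?thesis by simp
qed

lemma G_cyclic_identity:
  "real k1 * pk_factor n k1 * (real k2 - real k3) * G n k2 k3
   + real k2 * pk_factor n k2 * (real k3 - real k1) * G n k3 k1
   + real k3 * pk_factor n k3 * (real k1 - real k2) * G n k1 k2 = 0"
  by (simp add: G_def pk_factor_def algebra_simps)

lemma G_eq:
  "G n k1 k2 = pk_factor n k1 * pk_factor n k2
     + 6 * (real k1 - 1) * (real k2 - 1) + 2 * (real n - 1)"
  by (simp add: G_def pk_factor_def)

lemma pk_factor_strict_antimono:
  assumes "k1 < k2"
  shows "pk_factor n k2 < pk_factor n k1"
  using assms by (simp add: pk_factor_def)

lemma G_pos_of_same_sign:
  assumes "n \<ge> 2" "k1 \<ge> 1" "k2 \<ge> 1" "pk_factor n k1 * pk_factor n k2 \<ge> 0"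
  shows "G n k1 k2 > 0"
proof -
  have "6 * (real k1 - 1) * (real k2 - 1) \<ge> 0" using assms(2,3) by simp
  then show ?thesis using assms(1,4) by (simp add: G_eq)
qed

lemma pk_factor_sign_change_of_G_nonpos:
  assumes "n \<ge> 2" "1 \<le> k2" "k2 < k3" "G n k2 k3 \<le> 0"
  shows "pk_factor n k3 < 0" "pk_factor n k2 > 0"
proof -
  have "pk_factor n k2 * pk_factor n k3 < 0"
    using G_pos_of_same_sign[of n k2 k3] assms by linarith
  moreover have "pk_factor n k3 < pk_factor n k2"
    using pk_factor_strict_antimono assms(3) .
  ultimately show "pk_factor n k3 < 0" "pk_factor n k2 > 0"
    by (auto simp: mult_less_0_iff)
qed

theorem lemma3p4:
  fixes n :: nat
  assumes "n \<ge> 3"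
  shows "(\<forall>k1 k2. 1 \<le> k1 \<and> k1 < k2 \<and> k2 \<le> n \<longrightarrow>
            pk n k1 * qk n k2 - pk n k2 * qk n k1
              = 3 * (real n + 8) / ((real n - 1)^2 * (real n - 2))
                  * (real k1 - real k2) * G n k1 k2)
       \<and> (\<forall>k1 k2 k3. 1 \<le> k1 \<and> k1 < k2 \<and> k2 < k3 \<and> k3 \<le> n \<longrightarrow>
            real k1 * (real n + 2 - 3 * real k1) * (real k2 - real k3) * G n k2 k3
          + real k2 * (real n + 2 - 3 * real k2) * (real k3 - real k1) * G n k3 k1
          + real k3 * (real n + 2 - 3 * real k3) * (real k1 - real k2) * G n k1 k2 = 0)
       \<and> (\<forall>k1 k2 k3 k4. 1 \<le> k1 \<and> k1 < k2 \<and> k2 < k3 \<and> k3 < k4 \<and> k4 \<le> n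
              \<and> G n k2 k3 \<le> 0 \<longrightarrow>
            (real k2 < (real n + 2) / 3 \<and> real k3 > (real n + 2) / 3)
          \<and> (pk n k2 > 0 \<and> pk n k3 < 0)
          \<and> (G n k1 k2 > 0 \<and> G n k3 k4 > 0))"
proof (intro conjI allI impI)
  fix k1 k2 :: nat
  show "pk n k1 * qk n k2 - pk n k2 * qk n k1
    = 3 * (real n + 8) / ((real n - 1)^2 * (real n - 2)) * (real k1 - real k2) * G n k1 k2"
    using pk_qk_cross assms .
next
  fix k1 k2 k3 :: nat
  show "real k1 * (real n + 2 - 3 * real k1) * (real k2 - real k3) * G n k2 k3
    + real k2 * (real n + 2 - 3 * real k2) * (real k3 - real k1) * G n k3 k1
    + real k3 * (real n + 2 - 3 * real k3) * (real k1 - real k2) * G n k1 k2 = 0"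
    using G_cyclic_identity by (simp add: pk_factor_def)
next
  fix k1 k2 k3 k4 :: nat
  assume k: "1 \<le> k1 \<and> k1 < k2 \<and> k2 < k3 \<and> k3 < k4 \<and> k4 \<le> n \<and> G n k2 k3 \<le> 0"
  have n: "n \<ge> 2" "n \<noteq> 1" using assms by auto
  have neg3: "pk_factor n k3 < 0" and pos2: "pk_factor n k2 > 0"
    using pk_factor_sign_change_of_G_nonpos[of n k2 k3] n k by auto
  have pos1: "pk_factor n k1 > 0" and neg4: "pk_factor n k4 < 0"
    using pk_factor_strict_antimono[of k1 k2 n] pk_factor_strict_antimono[of k3 k4 n] k pos2 neg3
    by auto
  show "real k2 < (real n + 2) / 3" "real k3 > (real n + 2) / 3"
    using pos2 neg3 by (auto simp: pk_factor_def)
  show "pk n k2 > 0" "pk n k3 < 0"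
    using pos2 neg3 k assms by (auto simp: pk_eq n divide_neg_pos mult_pos_neg)
  show "G n k1 k2 > 0" "G n k3 k4 > 0"
    using G_pos_of_same_sign[of n k1 k2] G_pos_of_same_sign[of n k3 k4] n k
      pos1 pos2 mult_neg_neg[OF neg3 neg4]
    by auto
qed

end
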